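(* Consider testing $H_0^G:G\sim\mathcal G_d(N,1/2)$ versus $H_1^G:G\sim\mathcal G_d(N,1/2,\kappa)$ with $\kappa=N^\beta$, $0<\beta<1/2$, $d$ fixed. Let $C>0$ be a constant and let $f$ be a polynomial in the hyperedge indicator variables $(\mathcal A_e)_{e\in\binom{[N]}{d}}$ of $G$, of degree at most $D$ with $D\le C\log N$, such that $\mathbb E_{H_0^G}f(G)=0$ and $\mathbb E_{H_0^G}f(G)^2=1$. Then $\mathbb E_{H_1^G}f(G)=O(1)$, i.e. it is bounded by a constant not depending on $N$ or $f$.
   Context: $\mathcal G_d(N,1/2)$ is the random $d$-uniform hypergraph on $[N]$ where each $d$-element subset $e$ is a hyperedge independently with probability $1/2$; $\mathcal A_e\in\{0,1\}$ indicates whether $e$ is a hyperedge. $\mathcal G_d(N,1/2,\kappa)$ is obtained from $\mathcal G_d(N,1/2)$ by choosing a uniformly random $\kappa$-subset $K\subseteq[N]$ and adding all $d$-subsets of $K$ as hyperedges. *)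

theory Defs
  imports "HOL-Probability.Probability"
begin

definition hyperedges :: "nat \<Rightarrow> nat \<Rightarrow> nat set set" where
  "hyperedges N d = {e. e \<subseteq> {1..N} \<and> card e = d}"

definition hind :: "nat set set \<Rightarrow> nat set \<Rightarrow> real" where
  "hind G e = (if e \<in> G then 1 else 0)"

definition is_poly_deg_le :: "nat \<Rightarrow> nat \<Rightarrow> nat \<Rightarrow> (nat set set \<Rightarrow> real) \<Rightarrow> bool" where
  "is_poly_deg_le N d D f \<longleftrightarrow>
     (\<exists>(M :: (nat set \<Rightarrow> nat) set) (c :: (nat set \<Rightarrow> nat) \<Rightarrow> real).
        finite M \<and>
        (\<forall>m\<in>M. (\<forall>e. e \<notin> hyperedges N d \<longrightarrow> m e = 0) \<and> (\<Sum>e\<in>hyperedges N d. m e) \<le> D) \<and>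
        (\<forall>G. G \<subseteq> hyperedges N d \<longrightarrow>
              f G = (\<Sum>m\<in>M. c m * (\<Prod>e\<in>hyperedges N d. hind G e ^ m e))))"

text \<open>G_d(N,1/2): each d-subset is a hyperedge independently with prob. 1/2,
  i.e. the uniform distribution on sets of d-subsets of [N].\<close>
definition null_hg :: "nat \<Rightarrow> nat \<Rightarrow> nat set set pmf" where
  "null_hg N d = pmf_of_set (Pow (hyperedges N d))"

definition planted_hg :: "nat \<Rightarrow> nat \<Rightarrow> nat \<Rightarrow> nat set set pmf" where
  "planted_hg N d \<kappa> =
     bind_pmf (pmf_of_set {K. K \<subseteq> {1..N} \<and> card K = \<kappa>}) (\<lambda>K.
     map_pmf (\<lambda>G. G \<union> {e \<in> hyperedges N d. e \<subseteq> K}) (null_hg N d))"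

end

theory Submission
  imports Defs "HOL-Real_Asymp.Real_Asymp"
begin

text \<open>Expand f in the Walsh characters walsh S G = \<Prod>e\<in>S. \<plusminus>1. Under the null model they are
  orthonormal, so the hypotheses say that the coefficient of {} vanishes and the squared
  coefficients sum to 1. Planting the complete hypergraph on a random \<kappa>-set K turns walsh S into
  the constant 1 when \<Union>S \<subseteq> K and leaves its mean 0 otherwise; by Cauchy-Schwarz the squared
  planted mean is at most the sum of P(\<Union>S \<subseteq> K)^2 over the nonempty sets S of at most D
  hyperedges. That probability is at most (\<kappa>/N)^v for v = card (\<Union>S), and at most
  N^v min(2^(v^d), (v^d+1)^D) sets S share a given v, so the sum is dominated by
  \<Sum>v. N^(-(1-2\<beta>)v) min(2^(v^d), (v^d+1)^D). As D \<le> C ln N, the factor (v^d+1)^D is at most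
  N^((1-2\<beta>)v/2) once v is large, leaving a constant plus a geometric series.\<close>

section \<open>Walsh characters\<close>

definition walsh :: "'a set \<Rightarrow> 'a set \<Rightarrow> real" where
  "walsh S G = (\<Prod>e\<in>S. if e \<in> G then 1 else -1)"

definition walsh_expansion :: "'a set \<Rightarrow> 'a set set \<Rightarrow> ('a set \<Rightarrow> real) \<Rightarrow> ('a set \<Rightarrow> real) \<Rightarrow> bool" where
  "walsh_expansion E F a f \<longleftrightarrow> (\<forall>G. G \<subseteq> E \<longrightarrow> f G = (\<Sum>S\<in>F. a S * walsh S G))"

lemma sum_walsh:
  assumes "finite E" and "U \<subseteq> E"
  shows "(\<Sum>G\<in>Pow E. walsh U G) = (if U = {} then real (card (Pow E)) else 0)"
proof (cases "U = {}")
  case False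
  then obtain e where e: "e \<in> U" by blast
  have finU: "finite U" using assms finite_subset by blast
  define flip where "flip G = (if e \<in> G then G - {e} else insert e G)" for G
  have "bij_betw flip (Pow E) (Pow E)"
    by (rule bij_betw_byWitness[where f' = flip]) (use e assms(2) in \<open>auto simp: flip_def\<close>)
  moreover have "walsh U (flip G) = - walsh U G" for G
  proof -
    have "(\<Prod>x\<in>U - {e}. if x \<in> flip G then 1 else -1) = (\<Prod>x\<in>U - {e}. if x \<in> G then 1 else (-1::real))"
      by (rule prod.cong) (auto simp: flip_def)
    then show ?thesis
      unfolding walsh_def prod.remove[OF finU e] by (simp add: flip_def)
  qed
  ultimately have "(\<Sum>G\<in>Pow E. walsh U G) = - (\<Sum>G\<in>Pow E. walsh U G)"
    using sum.reindex_bij_betw[of flip "Pow E" "Pow E" "walsh U"] by (simp add: sum_negf)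
  then show ?thesis using False by simp
qed (simp add: walsh_def)

lemma walsh_mult:
  assumes "finite S" and "finite T"
  shows "walsh S G * walsh T G = walsh ((S - T) \<union> (T - S)) G"
proof -
  have "walsh (S \<inter> T) G * walsh (S \<inter> T) G = 1"
    unfolding walsh_def prod.distrib[symmetric] by (rule prod.neutral) simp
  moreover have "walsh S G = walsh (S \<inter> T) G * walsh (S - T) G"
    unfolding walsh_def using prod.Int_Diff[OF assms(1)] by blast
  moreover have "walsh T G = walsh (S \<inter> T) G * walsh (T - S) G"
    unfolding walsh_def using prod.Int_Diff[OF assms(2), of _ S] by (simp add: Int_commute)
  moreover have "walsh ((S - T) \<union> (T - S)) G = walsh (S - T) G * walsh (T - S) G"
    unfolding walsh_def by (rule prod.union_disjoint) (use assms in auto)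
  ultimately show ?thesis
    by (metis mult.assoc mult.commute mult_1)
qed

lemma sum_walsh_mult:
  assumes "finite E" and "S \<subseteq> E" and "T \<subseteq> E"
  shows "(\<Sum>G\<in>Pow E. walsh S G * walsh T G) = (if S = T then real (card (Pow E)) else 0)"
proof -
  have "finite S" "finite T" using assms finite_subset by blast+
  then have "(\<Sum>G\<in>Pow E. walsh S G * walsh T G) = (\<Sum>G\<in>Pow E. walsh ((S - T) \<union> (T - S)) G)"
    by (simp add: walsh_mult)
  also have "\<dots> = (if (S - T) \<union> (T - S) = {} then real (card (Pow E)) else 0)"
    by (rule sum_walsh) (use assms in auto)
  finally show ?thesis by auto
qed

lemma walsh_Un:
  assumes "finite S"
  shows "walsh S (G \<union> P) = walsh (S - P) G"
proof -
  have "walsh S (G \<union> P) = walsh (S \<inter> P) (G \<union> P) * walsh (S - P) (G \<union> P)"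
    unfolding walsh_def by (rule prod.Int_Diff[OF assms])
  moreover have "walsh (S \<inter> P) (G \<union> P) = 1"
    unfolding walsh_def by (rule prod.neutral) auto
  moreover have "walsh (S - P) (G \<union> P) = walsh (S - P) G"
    unfolding walsh_def by (rule prod.cong) auto
  ultimately show ?thesis by simp
qed

lemma prod_hind_walsh:
  assumes "finite T"
  shows "(\<Prod>e\<in>T. hind G e) = (1/2) ^ card T * (\<Sum>X\<in>Pow T. walsh X G)"
proof -
  have "(\<Prod>e\<in>T. hind G e) = (\<Prod>e\<in>T. (if e \<in> G then 1 else -1) / 2 + 1/2)"
    by (rule prod.cong) (auto simp: hind_def)
  also have "\<dots> = (\<Sum>X\<in>Pow T. (\<Prod>e\<in>X. (if e \<in> G then 1 else -1) / 2) * (\<Prod>e\<in>T - X. 1/2))"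
    by (rule prod_add[OF assms])
  also have "\<dots> = (\<Sum>X\<in>Pow T. (1/2) ^ card T * walsh X G)"
  proof (rule sum.cong[OF refl])
    fix X assume X: "X \<in> Pow T"
    then have "finite X" using assms finite_subset by blast
    then have "card T = card X + card (T - X)"
      using X assms by (simp add: card_Diff_subset card_mono)
    with \<open>finite X\<close> show "(\<Prod>e\<in>X. (if e \<in> G then 1 else -1) / 2) * (\<Prod>e\<in>T - X. 1/2) = (1/2) ^ card T * walsh X G"
      unfolding walsh_def by (simp add: prod_dividef power_add power_one_over)
  qed
  finally show ?thesis by (simp add: sum_distrib_left)
qed

section \<open>Low-degree polynomials in the Walsh basis\<close>

lemma walsh_expansion_sum:
  assumes "finite M" and "\<And>m. m \<in> M \<Longrightarrow> walsh_expansion E F (a m) (f m)"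
  shows "walsh_expansion E F (\<lambda>S. \<Sum>m\<in>M. c m * a m S) (\<lambda>G. \<Sum>m\<in>M. c m * f m G)"
  unfolding walsh_expansion_def
proof (intro allI impI)
  fix G assume "G \<subseteq> E"
  then have "(\<Sum>m\<in>M. c m * f m G) = (\<Sum>m\<in>M. \<Sum>S\<in>F. c m * a m S * walsh S G)"
    using assms(2) by (simp add: walsh_expansion_def sum_distrib_left mult.assoc)
  then show "(\<Sum>m\<in>M. c m * f m G) = (\<Sum>S\<in>F. (\<Sum>m\<in>M. c m * a m S) * walsh S G)"
    by (simp add: sum_distrib_right sum.swap[of _ M])
qed

lemma monomial_walsh_expansion:
  assumes "finite E" and "(\<Sum>e\<in>E. m e) \<le> D"
  defines "T \<equiv> {e\<in>E. m e \<noteq> 0}"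
  shows "walsh_expansion E {S. S \<subseteq> E \<and> card S \<le> D}
           (\<lambda>S. if S \<subseteq> T then (1/2) ^ card T else 0) (\<lambda>G. \<Prod>e\<in>E. hind G e ^ m e)"
  unfolding walsh_expansion_def
proof (intro allI impI)
  fix G
  let ?F = "{S. S \<subseteq> E \<and> card S \<le> D}"
  have finT: "finite T" and TE: "T \<subseteq> E" using assms(1) by (auto simp: T_def)
  have finF: "finite ?F" using assms(1) by (simp add: finite_subset[of _ "Pow E"])
  have "card T = (\<Sum>e\<in>T. 1)" by simp
  also have "\<dots> \<le> (\<Sum>e\<in>T. m e)" by (rule sum_mono) (simp add: T_def)
  also have "\<dots> \<le> D" using sum_mono2[OF assms(1) TE, of m] assms(2) by simp
  finally have PowT: "{S \<in> ?F. S \<subseteq> T} = Pow T"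
    using TE by (auto intro: order.trans[OF card_mono[OF finT]])
  have "(\<Prod>e\<in>E. hind G e ^ m e) = (\<Prod>e\<in>T. hind G e ^ m e)"
    unfolding T_def by (rule prod.mono_neutral_right) (use assms(1) in auto)
  also have "\<dots> = (\<Prod>e\<in>T. hind G e)"
    by (rule prod.cong) (auto simp: T_def hind_def)
  also have "\<dots> = (\<Sum>S\<in>{S \<in> ?F. S \<subseteq> T}. (1/2) ^ card T * walsh S G)"
    unfolding PowT by (simp add: prod_hind_walsh[OF finT] sum_distrib_left)
  also have "\<dots> = (\<Sum>S\<in>?F. if S \<subseteq> T then (1/2) ^ card T * walsh S G else 0)"
    by (rule sum.inter_filter[OF finF])
  also have "\<dots> = (\<Sum>S\<in>?F. (if S \<subseteq> T then (1/2) ^ card T else 0) * walsh S G)"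
    by (rule sum.cong) auto
  finally show "(\<Prod>e\<in>E. hind G e ^ m e) = (\<Sum>S\<in>?F. (if S \<subseteq> T then (1/2) ^ card T else 0) * walsh S G)" .
qed

lemma finite_hyperedges: "finite (hyperedges N d)"
  unfolding hyperedges_def by (rule finite_subset[of _ "Pow {1..N}"]) auto

lemma is_poly_deg_le_walsh_expansion:
  assumes "is_poly_deg_le N d D f"
  obtains a where "walsh_expansion (hyperedges N d) {S. S \<subseteq> hyperedges N d \<and> card S \<le> D} a f"
proof -
  let ?E = "hyperedges N d"
  obtain M c where "finite M" and deg: "\<And>m. m \<in> M \<Longrightarrow> (\<Sum>e\<in>?E. m e) \<le> D"
    and f: "\<And>G. G \<subseteq> ?E \<Longrightarrow> f G = (\<Sum>m\<in>M. c m * (\<Prod>e\<in>?E. hind G e ^ m e))"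
    using assms unfolding is_poly_deg_le_def by blast
  define a where "a S = (\<Sum>m\<in>M. c m * (if S \<subseteq> {e\<in>?E. m e \<noteq> 0} then (1/2) ^ card {e\<in>?E. m e \<noteq> 0} else 0))"
    for S
  have "walsh_expansion ?E {S. S \<subseteq> ?E \<and> card S \<le> D} a (\<lambda>G. \<Sum>m\<in>M. c m * (\<Prod>e\<in>?E. hind G e ^ m e))"
    unfolding a_def
    by (rule walsh_expansion_sum[OF \<open>finite M\<close> monomial_walsh_expansion[OF finite_hyperedges deg]])
  then have "walsh_expansion ?E {S. S \<subseteq> ?E \<and> card S \<le> D} a f"
    using f unfolding walsh_expansion_def by simp
  then show ?thesis by (rule that)
qed

section \<open>Null and planted expectations\<close>

lemma expectation_uniform_Pow:
  assumes "finite E"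
  shows "measure_pmf.expectation (pmf_of_set (Pow E)) g = (\<Sum>G\<in>Pow E. g G) / card (Pow E)"
  by (rule integral_pmf_of_set) (use assms in auto)

lemma expectation_uniform_walsh_expansion:
  assumes "finite E" and "F \<subseteq> Pow E" and "{} \<in> F" and "walsh_expansion E F a f"
  shows "measure_pmf.expectation (pmf_of_set (Pow E)) f = a {}"
proof -
  have finF: "finite F" using assms(1,2) finite_subset by blast
  have FE: "S \<subseteq> E" if "S \<in> F" for S using assms(2) that by blast
  have "(\<Sum>G\<in>Pow E. f G) = (\<Sum>G\<in>Pow E. \<Sum>S\<in>F. a S * walsh S G)"
    using assms(4) by (intro sum.cong) (auto simp: walsh_expansion_def)
  also have "\<dots> = (\<Sum>S\<in>F. a S * (\<Sum>G\<in>Pow E. walsh S G))"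
    by (simp add: sum.swap[of _ "Pow E"] sum_distrib_left)
  also have "\<dots> = (\<Sum>S\<in>F. if S = {} then a S * card (Pow E) else 0)"
    by (intro sum.cong) (auto simp: sum_walsh[OF assms(1) FE])
  also have "\<dots> = a {} * card (Pow E)"
    using finF assms(3) by simp
  finally show ?thesis
    unfolding expectation_uniform_Pow[OF assms(1)] using assms(1) by (simp add: card_gt_0_iff Pow_not_empty)
qed

lemma expectation_uniform_sq_walsh_expansion:
  assumes "finite E" and "F \<subseteq> Pow E" and "walsh_expansion E F a f"
  shows "measure_pmf.expectation (pmf_of_set (Pow E)) (\<lambda>G. (f G)\<^sup>2) = (\<Sum>S\<in>F. (a S)\<^sup>2)"
proof -
  have finF: "finite F" using assms(1,2) finite_subset by blast
  have FE: "S \<subseteq> E" if "S \<in> F" for S using assms(2) that by blast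
  have "(\<Sum>G\<in>Pow E. (f G)\<^sup>2) = (\<Sum>G\<in>Pow E. \<Sum>S\<in>F. \<Sum>T\<in>F. a S * a T * (walsh S G * walsh T G))"
    using assms(3) by (intro sum.cong) (auto simp: walsh_expansion_def power2_eq_square sum_product mult_ac)
  also have "\<dots> = (\<Sum>S\<in>F. \<Sum>T\<in>F. a S * a T * (\<Sum>G\<in>Pow E. walsh S G * walsh T G))"
    by (simp add: sum.swap[of _ "Pow E"] sum_distrib_left)
  also have "\<dots> = (\<Sum>S\<in>F. \<Sum>T\<in>F. if S = T then a S * a T * card (Pow E) else 0)"
    by (intro sum.cong) (auto simp: sum_walsh_mult[OF assms(1) FE FE])
  also have "\<dots> = (\<Sum>S\<in>F. (a S)\<^sup>2) * card (Pow E)"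
    using finF by (simp add: sum_distrib_right power2_eq_square)
  finally show ?thesis
    unfolding expectation_uniform_Pow[OF assms(1)] using assms(1) by (simp add: card_gt_0_iff Pow_not_empty)
qed

lemma expectation_planted_walsh_expansion:
  assumes "finite E" and "F \<subseteq> Pow E" and "walsh_expansion E F a f"
    and "finite Ks" and "Ks \<noteq> {}" and "\<And>K. P K \<subseteq> E"
  shows "measure_pmf.expectation (pmf_of_set Ks \<bind> (\<lambda>K. map_pmf (\<lambda>G. G \<union> P K) (pmf_of_set (Pow E)))) f
         = (\<Sum>S\<in>F. a S * measure_pmf.prob (pmf_of_set Ks) {K. S \<subseteq> P K})"
proof -
  have FE: "S \<subseteq> E" if "S \<in> F" for S using assms(2) that by blast
  have conditional: "measure_pmf.expectation (pmf_of_set (Pow E)) (\<lambda>G. f (G \<union> P K))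
      = (\<Sum>S\<in>F. a S * of_bool (S \<subseteq> P K))" for K
  proof -
    have "(\<Sum>G\<in>Pow E. f (G \<union> P K)) = (\<Sum>G\<in>Pow E. \<Sum>S\<in>F. a S * walsh (S - P K) G)"
      using assms(2,3) assms(6)[of K] finite_subset[OF _ assms(1)]
      by (intro sum.cong) (auto simp: walsh_expansion_def walsh_Un intro!: sum.cong)
    also have "\<dots> = (\<Sum>S\<in>F. a S * (\<Sum>G\<in>Pow E. walsh (S - P K) G))"
      by (simp add: sum.swap[of _ "Pow E"] sum_distrib_left)
    also have "\<dots> = (\<Sum>S\<in>F. a S * of_bool (S \<subseteq> P K)) * card (Pow E)"
      by (auto simp: sum_walsh[OF assms(1) order.trans[OF Diff_subset FE]] sum_distrib_right
          intro!: sum.cong)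
    finally show ?thesis
      unfolding expectation_uniform_Pow[OF assms(1)] using assms(1) by (simp add: card_gt_0_iff Pow_not_empty)
  qed
  have "measure_pmf.expectation (pmf_of_set Ks \<bind> (\<lambda>K. map_pmf (\<lambda>G. G \<union> P K) (pmf_of_set (Pow E)))) f
      = (\<Sum>K\<in>Ks. (\<Sum>S\<in>F. a S * of_bool (S \<subseteq> P K)) / card Ks)"
    using assms(1,4,5) by (subst pmf_expectation_bind_pmf_of_set) (auto simp: conditional divide_inverse mult.commute Pow_not_empty)
  also have "\<dots> = (\<Sum>S\<in>F. \<Sum>K\<in>Ks. a S * of_bool (S \<subseteq> P K) / card Ks)"
    by (subst sum.swap) (simp add: sum_divide_distrib)
  also have "\<dots> = (\<Sum>S\<in>F. a S * (card (Ks \<inter> {K. S \<subseteq> P K}) / card Ks))"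
    using assms(4) by (simp add: sum_divide_distrib[symmetric] sum_distrib_left[symmetric])
  finally show ?thesis
    using assms(4,5) by (simp add: measure_pmf_of_set)
qed

lemma planted_expectation_sq_le:
  assumes "finite E" and "F \<subseteq> Pow E" and "{} \<in> F" and "walsh_expansion E F a f"
    and "finite Ks" and "Ks \<noteq> {}" and "\<And>K. P K \<subseteq> E"
    and "measure_pmf.expectation (pmf_of_set (Pow E)) f = 0"
  shows "(measure_pmf.expectation (pmf_of_set Ks \<bind> (\<lambda>K. map_pmf (\<lambda>G. G \<union> P K) (pmf_of_set (Pow E)))) f)\<^sup>2
         \<le> measure_pmf.expectation (pmf_of_set (Pow E)) (\<lambda>G. (f G)\<^sup>2)
           * (\<Sum>S\<in>F - {{}}. (measure_pmf.prob (pmf_of_set Ks) {K. S \<subseteq> P K})\<^sup>2)"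
proof -
  let ?x = "\<lambda>S. measure_pmf.prob (pmf_of_set Ks) {K. S \<subseteq> P K}"
  let ?planted = "pmf_of_set Ks \<bind> (\<lambda>K. map_pmf (\<lambda>G. G \<union> P K) (pmf_of_set (Pow E)))"
  have finF: "finite F" using assms(1,2) finite_subset by blast
  have "a {} = 0"
    using expectation_uniform_walsh_expansion[OF assms(1-4)] assms(8) by simp
  then have "(measure_pmf.expectation ?planted f)\<^sup>2 = (\<Sum>S\<in>F - {{}}. a S * ?x S)\<^sup>2"
    using expectation_planted_walsh_expansion[OF assms(1,2,4-7)] finF assms(3)
    by (simp add: sum.remove)
  also have "\<dots> \<le> (\<Sum>S\<in>F - {{}}. (a S)\<^sup>2) * (\<Sum>S\<in>F - {{}}. (?x S)\<^sup>2)"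
    by (rule Cauchy_Schwarz_ineq_sum)
  also have "\<dots> \<le> measure_pmf.expectation (pmf_of_set (Pow E)) (\<lambda>G. (f G)\<^sup>2) * (\<Sum>S\<in>F - {{}}. (?x S)\<^sup>2)"
  proof (rule mult_right_mono)
    show "(\<Sum>S\<in>F - {{}}. (a S)\<^sup>2) \<le> measure_pmf.expectation (pmf_of_set (Pow E)) (\<lambda>G. (f G)\<^sup>2)"
      unfolding expectation_uniform_sq_walsh_expansion[OF assms(1,2,4)]
      using finF by (intro sum_mono2) auto
  qed (simp add: sum_nonneg)
  finally show ?thesis .
qed

lemma planted_hg_expectation_sq_le:
  assumes "is_poly_deg_le N d D f" and "k \<le> N"
    and "measure_pmf.expectation (null_hg N d) f = 0"
  shows "(measure_pmf.expectation (planted_hg N d k) f)\<^sup>2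
         \<le> measure_pmf.expectation (null_hg N d) (\<lambda>G. (f G)\<^sup>2)
           * (\<Sum>S\<in>{S. S \<subseteq> hyperedges N d \<and> card S \<le> D} - {{}}.
               (measure_pmf.prob (pmf_of_set {K. K \<subseteq> {1..N} \<and> card K = k}) {K. \<Union>S \<subseteq> K})\<^sup>2)"
proof -
  let ?E = "hyperedges N d" and ?Ks = "{K. K \<subseteq> {1..N} \<and> card K = k}"
  obtain a where a: "walsh_expansion ?E {S. S \<subseteq> ?E \<and> card S \<le> D} a f"
    using is_poly_deg_le_walsh_expansion[OF assms(1)] by blast
  have Ks: "finite ?Ks" "?Ks \<noteq> {}"
    using assms(2) by (auto simp: finite_subset[of _ "Pow {1..N}"] intro!: exI[of _ "{1..k}"])
  have "(measure_pmf.expectation (planted_hg N d k) f)\<^sup>2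
      \<le> measure_pmf.expectation (null_hg N d) (\<lambda>G. (f G)\<^sup>2)
        * (\<Sum>S\<in>{S. S \<subseteq> ?E \<and> card S \<le> D} - {{}}. (measure_pmf.prob (pmf_of_set ?Ks) {K. S \<subseteq> {e \<in> ?E. e \<subseteq> K}})\<^sup>2)"
    unfolding planted_hg_def null_hg_def
    by (rule planted_expectation_sq_le[OF finite_hyperedges _ _ a Ks])
      (use assms(3) in \<open>auto simp: null_hg_def\<close>)
  also have "\<dots> = measure_pmf.expectation (null_hg N d) (\<lambda>G. (f G)\<^sup>2)
        * (\<Sum>S\<in>{S. S \<subseteq> ?E \<and> card S \<le> D} - {{}}. (measure_pmf.prob (pmf_of_set ?Ks) {K. \<Union>S \<subseteq> K})\<^sup>2)"
  proof -
    have "{K. S \<subseteq> {e \<in> ?E. e \<subseteq> K}} = {K. \<Union>S \<subseteq> K}" if "S \<subseteq> ?E" for S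
      using that by blast
    then show ?thesis by (intro arg_cong2[where f = "(*)"] sum.cong) auto
  qed
  finally show ?thesis .
qed

section \<open>Uniform random subsets of fixed size\<close>

lemma card_supersets_of_card:
  assumes "finite A" and "V \<subseteq> A" and "card V \<le> k"
  shows "card {K. K \<subseteq> A \<and> card K = k \<and> V \<subseteq> K} = (card A - card V) choose (k - card V)"
proof -
  have finV: "finite V" using assms(1,2) finite_subset by blast
  have "bij_betw (\<lambda>K. K - V) {K. K \<subseteq> A \<and> card K = k \<and> V \<subseteq> K} {K. K \<subseteq> A - V \<and> card K = k - card V}"
  proof (rule bij_betw_byWitness[where f' = "\<lambda>K. K \<union> V"])
    show "(\<lambda>K. K - V) ` {K. K \<subseteq> A \<and> card K = k \<and> V \<subseteq> K} \<subseteq> {K. K \<subseteq> A - V \<and> card K = k - card V}"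
      using finV by (auto simp: card_Diff_subset)
    show "(\<lambda>K. K \<union> V) ` {K. K \<subseteq> A - V \<and> card K = k - card V} \<subseteq> {K. K \<subseteq> A \<and> card K = k \<and> V \<subseteq> K}"
    proof clarify
      fix K assume K: "K \<subseteq> A - V" "card K = k - card V"
      then have "card (K \<union> V) = card K + card V"
        using assms(1) finV by (intro card_Un_disjoint) (auto intro: finite_subset)
      then show "K \<union> V \<subseteq> A \<and> card (K \<union> V) = k \<and> V \<subseteq> K \<union> V"
        using K assms(2,3) by auto
    qed
  qed auto
  then have "card {K. K \<subseteq> A \<and> card K = k \<and> V \<subseteq> K} = card {K. K \<subseteq> A - V \<and> card K = k - card V}"
    by (rule bij_betw_same_card)
  also have "\<dots> = (card A - card V) choose (k - card V)"
    using assms(1,2) finV by (simp add: n_subsets card_Diff_subset)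
  finally show ?thesis .
qed

lemma choose_diff_mult_pow_le:
  assumes "v \<le> k" and "k \<le> N"
  shows "real ((N - v) choose (k - v)) * real N ^ v \<le> real (N choose k) * real k ^ v"
  using assms
proof (induction v)
  case (Suc v)
  let ?a = "real ((N - Suc v) choose (k - Suc v))"
  let ?b = "real ((N - v) choose (k - v))"
  have IH: "?b * real N ^ v \<le> real (N choose k) * real k ^ v"
    using Suc by simp
  have "(k - v) * ((N - v) choose (k - v)) = (N - v) * ((N - Suc v) choose (k - Suc v))"
    using binomial_absorption[of "k - Suc v" "N - v"] Suc.prems by (simp add: Suc_diff_Suc)
  then have absorb: "real (k - v) * ?b = real (N - v) * ?a"
    by (metis of_nat_mult)
  have kv: "real (k - v) * real N \<le> real (N - v) * real k"
    using Suc.prems by (simp add: of_nat_diff algebra_simps mult_right_mono)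
  have "real (N - v) * (?a * real N ^ Suc v) = real (k - v) * (?b * real N ^ v) * real N"
    by (simp add: absorb[symmetric] mult_ac)
  also have "\<dots> \<le> real (k - v) * (real (N choose k) * real k ^ v) * real N"
    by (intro mult_right_mono mult_left_mono IH) simp_all
  also have "\<dots> \<le> (real (N - v) * real k) * (real (N choose k) * real k ^ v)"
    using mult_right_mono[OF kv, of "real (N choose k) * real k ^ v"] by (simp add: mult_ac)
  also have "\<dots> = real (N - v) * (real (N choose k) * real k ^ Suc v)"
    by (simp add: mult_ac)
  finally have "real (N - v) * (?a * real N ^ Suc v) \<le> real (N - v) * (real (N choose k) * real k ^ Suc v)" .
  then show ?case
    using Suc.prems by (simp add: mult_le_cancel_left_pos)
qed simp

lemma prob_supset_uniform_k_subset_le: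
  assumes "finite A" and "A \<noteq> {}" and "V \<subseteq> A" and "k \<le> card A"
  shows "measure_pmf.prob (pmf_of_set {K. K \<subseteq> A \<and> card K = k}) {K. V \<subseteq> K} \<le> (k / card A) ^ card V"
proof -
  have finKs: "finite {K. K \<subseteq> A \<and> card K = k}"
    using assms(1) by (simp add: finite_subset[of _ "Pow A"])
  have cardKs: "card {K. K \<subseteq> A \<and> card K = k} = card A choose k"
    using assms(1) by (rule n_subsets)
  then have Ks_ne: "{K. K \<subseteq> A \<and> card K = k} \<noteq> {}"
    using assms(4) by force
  have "measure_pmf.prob (pmf_of_set {K. K \<subseteq> A \<and> card K = k}) {K. V \<subseteq> K}
      = card {K. K \<subseteq> A \<and> card K = k \<and> V \<subseteq> K} / (card A choose k)"
    using finKs Ks_ne by (simp add: measure_pmf_of_set cardKs Int_def conj_assoc)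
  also have "\<dots> \<le> (k / card A) ^ card V"
  proof (cases "card V \<le> k")
    case True
    have "real ((card A - card V) choose (k - card V)) * real (card A) ^ card V
          \<le> real (card A choose k) * real k ^ card V"
      using True assms(4) by (rule choose_diff_mult_pow_le)
    moreover have "real (card A choose k) > 0" "real (card A) ^ card V > 0"
      using assms by (auto simp: card_gt_0_iff)
    ultimately have "real ((card A - card V) choose (k - card V)) / real (card A choose k)
        \<le> real k ^ card V / real (card A) ^ card V"
      by (simp add: field_simps)
    then show ?thesis
      using card_supersets_of_card[OF assms(1,3) True] by (simp add: power_divide)
  next
    case False
    have "card V \<le> card K" if "K \<subseteq> A" "V \<subseteq> K" for K
      using that assms(1) by (meson card_mono finite_subset)
    with False have none: "{K. K \<subseteq> A \<and> card K = k \<and> V \<subseteq> K} = {}"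
      by force
    show ?thesis by (simp only: none card.empty) simp
  qed
  finally show ?thesis .
qed

section \<open>Counting sets of hyperedges by their span\<close>

definition low_degree_count_bound :: "nat \<Rightarrow> nat \<Rightarrow> nat \<Rightarrow> nat" where
  "low_degree_count_bound d D v = min (2 ^ (v ^ d)) ((v ^ d + 1) ^ D)"

lemma choose_le_pow: "n choose k \<le> n ^ k"
  by (cases "k \<le> n") (simp_all add: binomial_le_pow binomial_eq_0)

lemma card_subsets_card_le_pow:
  assumes "finite A"
  shows "card {S. S \<subseteq> A \<and> card S \<le> D} \<le> (card A + 1) ^ D"
proof -
  have "{S. S \<subseteq> A \<and> card S \<le> D} = (\<Union>j\<le>D. {S. S \<subseteq> A \<and> card S = j})" by auto
  then have "card {S. S \<subseteq> A \<and> card S \<le> D} \<le> (\<Sum>j\<le>D. card {S. S \<subseteq> A \<and> card S = j})"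
    by (simp add: card_UN_le)
  also have "\<dots> = (\<Sum>j\<le>D. card A choose j)"
    by (simp add: n_subsets[OF assms])
  also have "\<dots> \<le> (\<Sum>j\<le>D. (D choose j) * card A ^ j * 1 ^ (D - j))"
  proof (rule sum_mono)
    fix j assume "j \<in> {..D}"
    then have "1 \<le> D choose j" by (simp add: Suc_le_eq)
    then have "card A ^ j \<le> (D choose j) * card A ^ j"
      using mult_le_mono1 by fastforce
    with choose_le_pow have "card A choose j \<le> (D choose j) * card A ^ j"
      by (rule order.trans)
    then show "card A choose j \<le> (D choose j) * card A ^ j * 1 ^ (D - j)"
      by simp
  qed
  also have "\<dots> = (card A + 1) ^ D"
    using binomial_ring[of "card A" 1 D] by simp
  finally show ?thesis .
qed

lemma card_hyperedge_sets_on_le: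
  assumes "finite V"
  shows "card {S. S \<subseteq> {e. e \<subseteq> V \<and> card e = d} \<and> card S \<le> D} \<le> low_degree_count_bound d D (card V)"
proof -
  let ?Ed = "{e. e \<subseteq> V \<and> card e = d}"
  have finEd: "finite ?Ed" using assms by (simp add: finite_subset[of _ "Pow V"])
  have cardEd: "card ?Ed \<le> card V ^ d"
    using assms by (simp add: n_subsets choose_le_pow)
  have "card {S. S \<subseteq> ?Ed \<and> card S \<le> D} \<le> card (Pow ?Ed)"
    using finEd by (intro card_mono) auto
  also have "\<dots> \<le> 2 ^ (card V ^ d)"
    using finEd cardEd by (simp add: card_Pow power_increasing)
  finally have "card {S. S \<subseteq> ?Ed \<and> card S \<le> D} \<le> 2 ^ (card V ^ d)" .
  moreover have "card {S. S \<subseteq> ?Ed \<and> card S \<le> D} \<le> (card V ^ d + 1) ^ D"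
    using card_subsets_card_le_pow[OF finEd, of D] cardEd
    by (meson add_le_mono1 order.trans power_mono zero_le)
  ultimately show ?thesis
    by (simp add: low_degree_count_bound_def)
qed

lemma card_hyperedge_sets_spanning_le:
  "card {S. S \<subseteq> hyperedges N d \<and> card S \<le> D \<and> card (\<Union>S) = v}
     \<le> (N choose v) * low_degree_count_bound d D v"
proof -
  let ?Vs = "{V. V \<subseteq> {1..N} \<and> card V = v}"
  let ?A = "\<lambda>V. {S. S \<subseteq> {e. e \<subseteq> V \<and> card e = d} \<and> card S \<le> D}"
  have finVs: "finite ?Vs" by (simp add: finite_subset[of _ "Pow {1..N}"])
  have finV: "finite V" if "V \<in> ?Vs" for V
    using that by (simp add: finite_subset[of _ "{1..N}"])
  have finA: "finite (?A V)" if "finite V" for V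
  proof -
    have "finite {e. e \<subseteq> V \<and> card e = d}"
      using that by (simp add: finite_subset[of _ "Pow V"])
    then show ?thesis
      by (simp add: finite_subset[of _ "Pow {e. e \<subseteq> V \<and> card e = d}"])
  qed
  have "{S. S \<subseteq> hyperedges N d \<and> card S \<le> D \<and> card (\<Union>S) = v} \<subseteq> (\<Union>V\<in>?Vs. ?A V)"
  proof
    fix S assume "S \<in> {S. S \<subseteq> hyperedges N d \<and> card S \<le> D \<and> card (\<Union>S) = v}"
    then have "\<Union>S \<in> ?Vs" and "S \<in> ?A (\<Union>S)"
      by (auto simp: hyperedges_def)
    then show "S \<in> (\<Union>V\<in>?Vs. ?A V)" by blast
  qed
  then have "card {S. S \<subseteq> hyperedges N d \<and> card S \<le> D \<and> card (\<Union>S) = v} \<le> card (\<Union>V\<in>?Vs. ?A V)"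
    by (intro card_mono finite_UN_I finVs finA finV)
  also have "\<dots> \<le> (\<Sum>V\<in>?Vs. card (?A V))"
    by (rule card_UN_le[OF finVs])
  also have "\<dots> \<le> (\<Sum>V\<in>?Vs. low_degree_count_bound d D v)"
  proof (rule sum_mono)
    fix V assume "V \<in> ?Vs"
    then show "card (?A V) \<le> low_degree_count_bound d D v"
      using card_hyperedge_sets_on_le[OF finV] by simp
  qed
  also have "\<dots> = (N choose v) * low_degree_count_bound d D v"
    by (simp add: n_subsets)
  finally show ?thesis .
qed

lemma sum_prob_supset_sq_le:
  assumes "1 \<le> N" and "k \<le> N"
  shows "(\<Sum>S | S \<subseteq> hyperedges N d \<and> card S \<le> D.
            (measure_pmf.prob (pmf_of_set {K. K \<subseteq> {1..N} \<and> card K = k}) {K. \<Union>S \<subseteq> K})\<^sup>2)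
         \<le> (\<Sum>v\<le>N. ((real k)\<^sup>2 / N) ^ v * low_degree_count_bound d D v)"
proof -
  let ?F = "{S. S \<subseteq> hyperedges N d \<and> card S \<le> D}"
  let ?x = "\<lambda>S. measure_pmf.prob (pmf_of_set {K. K \<subseteq> {1..N} \<and> card K = k}) {K. \<Union>S \<subseteq> K}"
  have finF: "finite ?F"
    by (simp add: finite_subset[of _ "Pow (hyperedges N d)"] finite_hyperedges)
  have span: "\<Union>S \<subseteq> {1..N}" if "S \<in> ?F" for S
    using that by (auto simp: hyperedges_def)
  have x_le: "?x S \<le> (k / N) ^ card (\<Union>S)" if "S \<in> ?F" for S
    using prob_supset_uniform_k_subset_le[of "{1..N}" "\<Union>S" k] span[OF that] assms by simp
  have span_card: "card (\<Union>S) \<in> {..N}" if "S \<in> ?F" for S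
    using card_mono[of "{1..N}" "\<Union>S"] span[OF that] by simp
  have "(\<Sum>S\<in>?F. (?x S)\<^sup>2) \<le> (\<Sum>S\<in>?F. ((k / N) ^ card (\<Union>S))\<^sup>2)"
    by (intro sum_mono power_mono x_le) simp_all
  also have "\<dots> = (\<Sum>v\<le>N. \<Sum>S | S \<in> ?F \<and> card (\<Union>S) = v. ((k / N) ^ card (\<Union>S))\<^sup>2)"
    by (rule sum.group[OF finF finite_atMost, symmetric]) (use span_card in blast)
  also have "\<dots> = (\<Sum>v\<le>N. card {S. S \<subseteq> hyperedges N d \<and> card S \<le> D \<and> card (\<Union>S) = v} * ((k / N) ^ v)\<^sup>2)"
    by (intro sum.cong) (simp_all add: conj_assoc)
  also have "\<dots> \<le> (\<Sum>v\<le>N. (real N ^ v * low_degree_count_bound d D v) * ((k / N) ^ v)\<^sup>2)"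
  proof (intro sum_mono mult_right_mono)
    fix v
    have "card {S. S \<subseteq> hyperedges N d \<and> card S \<le> D \<and> card (\<Union>S) = v}
        \<le> N ^ v * low_degree_count_bound d D v"
      using card_hyperedge_sets_spanning_le[of N d D v] choose_le_pow[of N v]
      by (meson mult_le_mono1 order.trans)
    then show "real (card {S. S \<subseteq> hyperedges N d \<and> card S \<le> D \<and> card (\<Union>S) = v})
        \<le> real N ^ v * low_degree_count_bound d D v"
      using of_nat_mono by fastforce
  qed simp
  also have "\<dots> = (\<Sum>v\<le>N. ((real k)\<^sup>2 / N) ^ v * low_degree_count_bound d D v)"
  proof (intro sum.cong refl)
    fix v
    have "real N * (k / N)\<^sup>2 = (real k)\<^sup>2 / N"
      using assms(1) by (simp add: power2_eq_square)
    then have "real N ^ v * ((k / N) ^ v)\<^sup>2 = ((real k)\<^sup>2 / N) ^ v"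
      by (metis power_mult_distrib power_mult mult.commute)
    then show "real N ^ v * low_degree_count_bound d D v * ((k / N) ^ v)\<^sup>2
        = ((real k)\<^sup>2 / N) ^ v * low_degree_count_bound d D v"
      by (simp add: mult_ac)
  qed
  finally show ?thesis .
qed

section \<open>The series bound\<close>

lemma eventually_C_ln_le:
  fixes C \<epsilon> :: real
  assumes "C > 0" and "\<epsilon> > 0"
  shows "\<forall>\<^sub>F v in sequentially. C * ln (real v ^ d + 1) \<le> \<epsilon> * real v / 2"
proof -
  have "\<forall>\<^sub>F v in sequentially. C * (ln 2 + real d * ln (real v)) \<le> \<epsilon> * real v / 2"
    using assms by real_asymp
  moreover have "\<forall>\<^sub>F v in sequentially. 1 \<le> v"
    by (rule eventually_ge_at_top)
  ultimately show ?thesis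
  proof eventually_elim
    case (elim v)
    then have pow_ge_1: "1 \<le> real v ^ d"
      by (simp add: one_le_power)
    have "ln (real v ^ d + 1) \<le> ln (2 * real v ^ d)"
      by (subst ln_le_cancel_iff) (use pow_ge_1 in linarith)+
    also have "\<dots> = ln 2 + real d * ln (real v)"
      using elim by (simp add: ln_mult ln_realpow)
    finally show ?case
      using elim(1) assms(1) by (smt (verit) mult_left_mono)
  qed
qed

lemma power_pow_le_geometric:
  fixes C \<epsilon> q :: real and N D v d :: nat
  assumes "2 \<le> N" and "\<epsilon> > 0" and "real D \<le> C * ln (real N)"
    and "C * ln (real v ^ d + 1) \<le> \<epsilon> * real v / 2"
    and "0 \<le> q" and "q \<le> real N powr (- \<epsilon>)"
  shows "q ^ v * (real v ^ d + 1) ^ D \<le> (2 powr (- \<epsilon> / 2)) ^ v"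
proof -
  have lnN: "ln (real N) > 0" using assms(1) by simp
  have "0 < real v ^ d + 1"
    using zero_le_power[of "real v" d] by linarith
  then have "(real v ^ d + 1) ^ D = exp (real D * ln (real v ^ d + 1))"
    by (simp add: exp_of_nat_mult)
  also have "\<dots> \<le> exp (ln (real N) * (C * ln (real v ^ d + 1)))"
    using assms(3) by (simp add: mult.assoc[symmetric] mult_right_mono mult.commute[of "ln _"])
  also have "\<dots> \<le> exp (ln (real N) * (\<epsilon> * real v / 2))"
    using assms(4) lnN by simp
  also have "\<dots> = real N powr (\<epsilon> * real v / 2)"
    using assms(1) by (simp add: powr_def mult.commute)
  finally have growth: "(real v ^ d + 1) ^ D \<le> real N powr (\<epsilon> * real v / 2)" .
  have "q ^ v * (real v ^ d + 1) ^ D \<le> (real N powr (- \<epsilon>)) ^ v * real N powr (\<epsilon> * real v / 2)"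
    using assms(5,6) growth by (intro mult_mono power_mono) simp_all
  also have "\<dots> = real N powr (- \<epsilon> * real v) * real N powr (\<epsilon> * real v / 2)"
    using assms(1) by (simp add: powr_power mult.commute)
  also have "\<dots> = real N powr (- \<epsilon> * real v + \<epsilon> * real v / 2)"
    by (rule powr_add[symmetric])
  also have "\<dots> = real N powr (- (\<epsilon> / 2) * real v)"
    by (rule arg_cong[where f = "\<lambda>t. real N powr t"]) simp
  also have "\<dots> \<le> 2 powr (- (\<epsilon> / 2) * real v)"
    using assms(1,2) by (intro powr_mono2') simp_all
  also have "\<dots> = (2 powr (- \<epsilon> / 2)) ^ v"
    by (simp add: powr_power mult.commute)
  finally show ?thesis .
qed

lemma low_degree_count_bound_le:
  shows "real (low_degree_count_bound d D v) \<le> 2 ^ (v ^ d)"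
    and "real (low_degree_count_bound d D v) \<le> (real v ^ d + 1) ^ D"
proof -
  have "real (low_degree_count_bound d D v) \<le> real (2 ^ (v ^ d))"
    by (rule of_nat_mono) (simp add: low_degree_count_bound_def)
  then show "real (low_degree_count_bound d D v) \<le> 2 ^ (v ^ d)" by simp
  have "real (low_degree_count_bound d D v) \<le> real ((v ^ d + 1) ^ D)"
    by (rule of_nat_mono) (simp add: low_degree_count_bound_def)
  then show "real (low_degree_count_bound d D v) \<le> (real v ^ d + 1) ^ D" by (simp add: add.commute)
qed

lemma low_degree_series_bounded:
  fixes C \<epsilon> :: real
  assumes "C > 0" and "\<epsilon> > 0"
  obtains B where "0 \<le> B"
    and "\<And>N D q. 2 \<le> N \<Longrightarrow> real D \<le> C * ln (real N) \<Longrightarrow> 0 \<le> q \<Longrightarrow> q \<le> real N powr (- \<epsilon>) \<Longrightarrow>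
           (\<Sum>v\<le>N. q ^ v * low_degree_count_bound d D v) \<le> B"
proof -
  obtain v0 where v0: "\<And>v. v \<ge> v0 \<Longrightarrow> C * ln (real v ^ d + 1) \<le> \<epsilon> * real v / 2"
    using eventually_C_ln_le[OF assms, of d] by (auto simp: eventually_sequentially)
  define r :: real where "r = 2 powr (- \<epsilon> / 2)"
  have r: "0 < r" "r < 1"
    using assms(2) by (auto simp: r_def intro: powr_less_one)
  define B where "B = real v0 * 2 ^ (v0 ^ d) + 1 / (1 - r)"
  show ?thesis
  proof
    show "0 \<le> B" using r by (simp add: B_def)
  next
    fix N D :: nat and q :: real
    assume N: "2 \<le> N" and D: "real D \<le> C * ln (real N)" and q: "0 \<le> q" "q \<le> real N powr (- \<epsilon>)"
    have "real N powr (- \<epsilon>) \<le> real N powr 0"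
      using N assms(2) by (intro powr_mono) auto
    with q(2) N have q_le_1: "q \<le> 1"
      by simp
    have term_le: "q ^ v * low_degree_count_bound d D v \<le> (if v < v0 then 2 ^ (v0 ^ d) else 0) + r ^ v" for v
    proof (cases "v < v0")
      case True
      have "q ^ v * low_degree_count_bound d D v \<le> 1 * 2 ^ (v ^ d)"
        using q q_le_1 low_degree_count_bound_le(1) by (intro mult_mono power_le_one) simp_all
      also have "\<dots> \<le> 2 ^ (v0 ^ d)"
        using True by (simp add: power_mono)
      finally have "q ^ v * low_degree_count_bound d D v \<le> 2 ^ (v0 ^ d)" .
      moreover have "0 \<le> r ^ v" using r by simp
      ultimately show ?thesis using True by (simp add: add_increasing2)
    next
      case False
      have "q ^ v * low_degree_count_bound d D v \<le> q ^ v * (real v ^ d + 1) ^ D"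
        using q low_degree_count_bound_le(2) by (intro mult_left_mono) simp_all
      also have "\<dots> \<le> r ^ v"
        unfolding r_def using N assms(2) D v0[of v] False q by (intro power_pow_le_geometric) simp_all
      finally show ?thesis using False by simp
    qed
    have "(\<Sum>v\<le>N. q ^ v * low_degree_count_bound d D v)
        \<le> (\<Sum>v\<le>N. if v < v0 then 2 ^ (v0 ^ d) else 0) + (\<Sum>v\<le>N. r ^ v)"
      unfolding sum.distrib[symmetric] by (rule sum_mono) (rule term_le)
    also have "(\<Sum>v\<le>N. if v < v0 then (2::real) ^ (v0 ^ d) else 0) \<le> real v0 * 2 ^ (v0 ^ d)"
    proof -
      have "(\<Sum>v\<le>N. if v < v0 then (2::real) ^ (v0 ^ d) else 0) = real (card ({..N} \<inter> {..<v0})) * 2 ^ (v0 ^ d)"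
        by (simp add: sum.If_cases Int_def)
      also have "\<dots> \<le> real v0 * 2 ^ (v0 ^ d)"
        using card_mono[of "{..<v0}" "{..N} \<inter> {..<v0}"] by (intro mult_right_mono) simp_all
      finally show ?thesis .
    qed
    also have "(\<Sum>v\<le>N. r ^ v) \<le> 1 / (1 - r)"
      using r sum_le_suminf[of "\<lambda>v. r ^ v" "{..N}"] suminf_geometric[of r] summable_geometric[of r]
      by simp
    finally show "(\<Sum>v\<le>N. q ^ v * low_degree_count_bound d D v) \<le> B"
      by (simp add: B_def)
  qed
qed

section \<open>Specialisation to \<kappa> = \<lfloor>N powr \<beta>\<rfloor>\<close>

lemma nat_floor_powr_le:
  assumes "\<beta> \<le> 1"
  shows "nat \<lfloor>real N powr \<beta>\<rfloor> \<le> N"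
proof (cases "N = 0")
  case False
  then have "real N powr \<beta> \<le> real N"
    using powr_mono[OF assms, of "real N"] by simp
  then show ?thesis by linarith
qed simp

lemma floor_powr_sq_div_le:
  assumes "1 \<le> N"
  shows "(real (nat \<lfloor>real N powr \<beta>\<rfloor>))\<^sup>2 / N \<le> real N powr (- (1 - 2 * \<beta>))"
proof -
  have "real (nat \<lfloor>real N powr \<beta>\<rfloor>) \<le> real N powr \<beta>"
    using powr_ge_zero[of "real N" \<beta>] by linarith
  then have "(real (nat \<lfloor>real N powr \<beta>\<rfloor>))\<^sup>2 \<le> (real N powr \<beta>)\<^sup>2"
    by (intro power_mono) simp_all
  also have "\<dots> = real N powr (2 * \<beta>)"
    using assms by (simp add: powr_power)
  finally show ?thesis
    using assms by (simp add: divide_right_mono powr_diff powr_minus_divide)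
qed

lemma planted_advantage_bounded:
  fixes C \<beta> :: real
  assumes "C > 0" and "\<beta> < 1/2"
  obtains B where "0 \<le> B"
    and "\<And>N D. real D \<le> C * ln (real N) \<Longrightarrow>
           (\<Sum>S\<in>{S. S \<subseteq> hyperedges N d \<and> card S \<le> D} - {{}}.
              (measure_pmf.prob (pmf_of_set {K. K \<subseteq> {1..N} \<and> card K = nat \<lfloor>real N powr \<beta>\<rfloor>})
                {K. \<Union>S \<subseteq> K})\<^sup>2) \<le> B"
proof -
  obtain B where "0 \<le> B" and B: "\<And>N D q. 2 \<le> N \<Longrightarrow> real D \<le> C * ln (real N) \<Longrightarrow> 0 \<le> q
      \<Longrightarrow> q \<le> real N powr (- (1 - 2 * \<beta>)) \<Longrightarrow> (\<Sum>v\<le>N. q ^ v * low_degree_count_bound d D v) \<le> B"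
    using low_degree_series_bounded[of C "1 - 2 * \<beta>"] assms by auto
  show ?thesis
  proof (rule that[OF \<open>0 \<le> B\<close>])
    fix N D assume D: "real D \<le> C * ln (real N)"
    let ?k = "nat \<lfloor>real N powr \<beta>\<rfloor>"
    let ?x = "\<lambda>S. measure_pmf.prob (pmf_of_set {K. K \<subseteq> {1..N} \<and> card K = ?k}) {K. \<Union>S \<subseteq> K}"
    show "(\<Sum>S\<in>{S. S \<subseteq> hyperedges N d \<and> card S \<le> D} - {{}}. (?x S)\<^sup>2) \<le> B"
    proof (cases "D = 0")
      case True
      then have no_sets: "{S. S \<subseteq> hyperedges N d \<and> card S \<le> D} - {{}} = {}"
        using finite_hyperedges by (auto dest: finite_subset)
      show ?thesis
        unfolding no_sets using \<open>0 \<le> B\<close> by simp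
    next
      case False
      have N: "2 \<le> N"
      proof (rule ccontr)
        assume "\<not> 2 \<le> N"
        then have "ln (real N) \<le> 0"
          by (cases N) auto
        then have "C * ln (real N) \<le> 0"
          using assms(1) by (simp add: mult_nonneg_nonpos)
        with D False show False by simp
      qed
      have "(\<Sum>S\<in>{S. S \<subseteq> hyperedges N d \<and> card S \<le> D} - {{}}. (?x S)\<^sup>2)
          \<le> (\<Sum>S\<in>{S. S \<subseteq> hyperedges N d \<and> card S \<le> D}. (?x S)\<^sup>2)"
        by (rule sum_mono2) (simp_all add: finite_subset[of _ "Pow (hyperedges N d)"] finite_hyperedges)
      also have "\<dots> \<le> (\<Sum>v\<le>N. ((real ?k)\<^sup>2 / N) ^ v * low_degree_count_bound d D v)"
        using N by (intro sum_prob_supset_sq_le nat_floor_powr_le[of \<beta>]) (use assms(2) in simp_all)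
      also have "\<dots> \<le> B"
        using N by (intro B[OF N D] floor_powr_sq_div_le) simp_all
      finally show ?thesis .
    qed
  qed
qed

lemma abs_le_of_power2_le:
  fixes x :: real
  assumes "x\<^sup>2 \<le> B"
  shows "\<bar>x\<bar> \<le> B + 1"
proof (cases "\<bar>x\<bar> \<le> 1")
  case True
  then show ?thesis using assms zero_le_power2[of x] by linarith
next
  case False
  then have "1 * \<bar>x\<bar> \<le> \<bar>x\<bar> * \<bar>x\<bar>"
    by (intro mult_right_mono) simp_all
  then show ?thesis using assms by (simp add: power2_eq_square)
qed

theorem mainTheorem12:
  fixes d :: nat and \<beta> C :: real
  assumes "d \<ge> 1" and "0 < \<beta>" and "\<beta> < 1/2" and "C > 0"
  shows "\<exists>B::real. \<forall>(N::nat) (D::nat) (f :: nat set set \<Rightarrow> real).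
           real D \<le> C * ln (real N) \<longrightarrow>
           is_poly_deg_le N d D f \<longrightarrow>
           measure_pmf.expectation (null_hg N d) f = 0 \<longrightarrow>
           measure_pmf.expectation (null_hg N d) (\<lambda>G. (f G)^2) = 1 \<longrightarrow>
           \<bar>measure_pmf.expectation (planted_hg N d (nat \<lfloor>real N powr \<beta>\<rfloor>)) f\<bar> \<le> B"
proof -
  obtain B where B: "\<And>N D. real D \<le> C * ln (real N) \<Longrightarrow>
      (\<Sum>S\<in>{S. S \<subseteq> hyperedges N d \<and> card S \<le> D} - {{}}.
         (measure_pmf.prob (pmf_of_set {K. K \<subseteq> {1..N} \<and> card K = nat \<lfloor>real N powr \<beta>\<rfloor>})
           {K. \<Union>S \<subseteq> K})\<^sup>2) \<le> B"
    using planted_advantage_bounded[OF assms(4,3), of d] by blast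
  show ?thesis
  proof (intro exI[of _ "B + 1"] allI impI)
    fix N D f
    assume D: "real D \<le> C * ln (real N)" and poly: "is_poly_deg_le N d D f"
      and mean: "measure_pmf.expectation (null_hg N d) f = 0"
      and var: "measure_pmf.expectation (null_hg N d) (\<lambda>G. (f G)^2) = 1"
    have "(measure_pmf.expectation (planted_hg N d (nat \<lfloor>real N powr \<beta>\<rfloor>)) f)\<^sup>2
        \<le> 1 * (\<Sum>S\<in>{S. S \<subseteq> hyperedges N d \<and> card S \<le> D} - {{}}.
         (measure_pmf.prob (pmf_of_set {K. K \<subseteq> {1..N} \<and> card K = nat \<lfloor>real N powr \<beta>\<rfloor>})
           {K. \<Union>S \<subseteq> K})\<^sup>2)"
      using planted_hg_expectation_sq_le[OF poly nat_floor_powr_le mean] assms(3) var by simp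
    also have "\<dots> \<le> B"
      using B[OF D] by simp
    finally have "(measure_pmf.expectation (planted_hg N d (nat \<lfloor>real N powr \<beta>\<rfloor>)) f)\<^sup>2 \<le> B" .
    then show "\<bar>measure_pmf.expectation (planted_hg N d (nat \<lfloor>real N powr \<beta>\<rfloor>)) f\<bar> \<le> B + 1"
      by (rule abs_le_of_power2_le)
  qed
qed

end
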